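(* Let $v_1,v_2,v_3$ be a basis of $\mathbb{Z}^3$ such that $\|v_i\|^2$ is odd for all $i$. Then at most one of the numbers $\|v_1\|^2,\|v_2\|^2,\|v_3\|^2$ is congruent to $3\bmod 4$.
   Context: $\|\cdot\|$ is the Euclidean norm on $\mathbb{R}^3$. *)

theory Defs
  imports "HOL-Analysis.Analysis"
begin

definition sqnorm :: "int ^ 3 \<Rightarrow> int" where
  "sqnorm v = (\<Sum>i\<in>UNIV. (v $ i)^2)"

definition is_Z3_basis :: "int ^ 3 \<Rightarrow> int ^ 3 \<Rightarrow> int ^ 3 \<Rightarrow> bool" where
  "is_Z3_basis v1 v2 v3 \<longleftrightarrow>
     (\<forall>w :: int ^ 3. \<exists>!abc :: int \<times> int \<times> int.
        w = fst abc *s v1 + fst (snd abc) *s v2 + snd (snd abc) *s v3)"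

end

theory Submission
  imports Defs
begin

text \<open>A square is congruent to 0 or 1 mod 4, so a sum of three squares is congruent to 3 mod 4
  only if all three summands are odd. Two basis vectors with this property therefore differ by
  a vector in 2Z^3, whose coordinates with respect to the basis are all even; but the
  coordinates of their difference are 1 and -1.\<close>

lemma int_power2_mod_4: "(x::int)\<^sup>2 mod 4 = (if even x then 0 else 1)"
proof (cases "even x")
  case True
  then obtain k where "x = 2 * k" by blast
  then show ?thesis by (simp add: power2_eq_square)
next
  case False
  then obtain k where "x = 2 * k + 1" using oddE by blast
  define m where "m = k * k + k"
  have "x\<^sup>2 = 1 + 4 * m"
    unfolding m_def \<open>x = 2 * k + 1\<close> by (simp add: power2_eq_square algebra_simps)
  then show ?thesis using False by simp
qed

lemma mod_add3_eq: "((a::int) mod n + b mod n + c mod n) mod n = (a + b + c) mod n"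
proof -
  have "(a mod n + b mod n + c mod n) mod n = ((a mod n + b mod n) mod n + c mod n) mod n"
    by (rule mod_add_left_eq[symmetric])
  also have "\<dots> = (a + b + c) mod n"
    by (simp only: mod_add_eq)
  finally show ?thesis .
qed

lemma sqnorm_eq: "sqnorm v = (v$1)\<^sup>2 + (v$2)\<^sup>2 + (v$3)\<^sup>2"
  unfolding sqnorm_def by (simp add: sum_3)

lemma odd_nth_if_sqnorm_mod_4_eq_3:
  assumes "sqnorm v mod 4 = 3"
  shows "odd (v$i)"
proof -
  have "((v$1)\<^sup>2 mod 4 + (v$2)\<^sup>2 mod 4 + (v$3)\<^sup>2 mod 4) mod 4 = 3"
    using assms unfolding sqnorm_eq mod_add3_eq .
  then have "odd (v$1) \<and> odd (v$2) \<and> odd (v$3)"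
    unfolding int_power2_mod_4 by (auto split: if_splits)
  then show ?thesis using exhaust_3[of i] by auto
qed

lemma is_Z3_basis_even_coeffs:
  assumes basis: "is_Z3_basis v1 v2 v3"
    and even_w: "\<And>i. even (w$i)"
    and w: "w = a *s v1 + b *s v2 + c *s v3"
  shows "even a \<and> even b \<and> even c"
proof -
  define u where "u = (\<chi> i. w$i div 2)"
  have "w = 2 *s u" unfolding u_def using even_w by (simp add: vec_eq_iff)
  obtain p where "u = fst p *s v1 + fst (snd p) *s v2 + snd (snd p) *s v3"
    using basis unfolding is_Z3_basis_def by blast
  then have w2: "w = (2 * fst p) *s v1 + (2 * fst (snd p)) *s v2 + (2 * snd (snd p)) *s v3"
    using \<open>w = 2 *s u\<close> by (simp add: vec_eq_iff algebra_simps)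
  have "\<exists>!q :: int \<times> int \<times> int. w = fst q *s v1 + fst (snd q) *s v2 + snd (snd q) *s v3"
    using basis unfolding is_Z3_basis_def by blast
  then have "(a, b, c) = (2 * fst p, 2 * fst (snd p), 2 * snd (snd p))"
    using w w2 by (metis fst_conv snd_conv)
  then show ?thesis by auto
qed

lemma is_Z3_basis_not_both_sqnorm_mod_4_eq_3:
  assumes basis: "is_Z3_basis v1 v2 v3"
    and diff: "x - y = a *s v1 + b *s v2 + c *s v3"
    and odd_coeff: "odd a \<or> odd b \<or> odd c"
  shows "\<not> (sqnorm x mod 4 = 3 \<and> sqnorm y mod 4 = 3)"
proof
  assume "sqnorm x mod 4 = 3 \<and> sqnorm y mod 4 = 3"
  then have "odd (x$i) \<and> odd (y$i)" for i
    using odd_nth_if_sqnorm_mod_4_eq_3 by blast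
  then have "even ((x - y)$i)" for i by simp
  with is_Z3_basis_even_coeffs[OF basis _ diff] odd_coeff show False by blast
qed

theorem proposition4:
  fixes v1 v2 v3 :: "int ^ 3"
  assumes "is_Z3_basis v1 v2 v3"
    and "odd (sqnorm v1)" and "odd (sqnorm v2)" and "odd (sqnorm v3)"
  shows "\<not> (sqnorm v1 mod 4 = 3 \<and> sqnorm v2 mod 4 = 3)
       \<and> \<not> (sqnorm v1 mod 4 = 3 \<and> sqnorm v3 mod 4 = 3)
       \<and> \<not> (sqnorm v2 mod 4 = 3 \<and> sqnorm v3 mod 4 = 3)"
proof -
  note not_both = is_Z3_basis_not_both_sqnorm_mod_4_eq_3[OF assms(1)]
  have "v1 - v2 = 1 *s v1 + (-1) *s v2 + 0 *s v3"
    and "v1 - v3 = 1 *s v1 + 0 *s v2 + (-1) *s v3"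
    and "v2 - v3 = 0 *s v1 + 1 *s v2 + (-1) *s v3"
    by (simp_all add: vec_eq_iff)
  from this[THEN not_both] show ?thesis by simp
qed

end
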